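(* Let $c_0(t)$ be an analytic function, not identically zero, and define analytic functions $c_n(t)$, $n\ge 1$, by $$c_1=\dot c_0,\qquad c_{n+1}=\dot c_n+\sum_{s=0}^{n-1}c_s c_{n-1-s}\quad(n\ge 1).$$ Let $U(t)=-c_0(t)$ and define $\sigma_m(t)$, $m\ge 1$, by $\sigma_1=-U$, $\sigma_2=-\dot U$, and $$\sigma_{m+1}=\dot\sigma_m+\sum_{k=1}^{m-1}\sigma_k\sigma_{m-k}\quad(m\ge 1).$$ Then $\sigma_m(t)=c_{m-1}(t)$ for all $m\ge 1$.
   Context: The recursion for $c_n$ is the moment recursion of the unrestricted Toda chain in the case $u_0(t)=c_0(t)$ (equivalently, boundary condition $b_{-1}\equiv 0$). The $\sigma_m$ are the conserved densities of the Korteweg–de Vries equation associated with the Schrödinger potential $U$ (with the variable $t$ playing the role of the spatial variable $x$). A dot denotes differentiation in $t$. *)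

theory Defs
  imports "HOL-Complex_Analysis.Complex_Analysis"
begin

function toda_c :: "(complex \<Rightarrow> complex) \<Rightarrow> nat \<Rightarrow> complex \<Rightarrow> complex" where
  "toda_c f 0 = f"
| "toda_c f (Suc 0) = deriv f"
| "toda_c f (Suc (Suc n)) =
     (\<lambda>t. deriv (toda_c f (Suc n)) t + (\<Sum>s\<le>n. toda_c f s t * toda_c f (n - s) t))"
  by pat_completeness auto
termination by (relation "Wellfounded.measure (\<lambda>(f, n). n)") auto

text \<open>KdV conserved densities (indexed from 1; index 0 unused, set to 0):
  sigma_1 = -U, sigma_2 = -U', sigma_(m+1) = sigma_m' + sum_(k=1)^(m-1) sigma_k sigma_(m-k).\<close>
function kdv_sigma :: "(complex \<Rightarrow> complex) \<Rightarrow> nat \<Rightarrow> complex \<Rightarrow> complex" where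
  "kdv_sigma U 0 = (\<lambda>t. 0)"
| "kdv_sigma U (Suc 0) = (\<lambda>t. - U t)"
| "kdv_sigma U (Suc (Suc 0)) = (\<lambda>t. - deriv U t)"
| "kdv_sigma U (Suc (Suc (Suc m))) =
     (\<lambda>t. deriv (kdv_sigma U (Suc (Suc m))) t
          + (\<Sum>k\<in>{1..Suc m}. kdv_sigma U k t * kdv_sigma U (Suc (Suc m) - k) t))"
  by pat_completeness auto
termination by (relation "Wellfounded.measure (\<lambda>(U, n). n)") auto

end

theory Submission
  imports Defs
begin

text \<open>Both recursions are the same quadratic recursion in disguise: shifting the index of
  \<open>\<sigma>\<close> by one turns \<open>\<sigma>\<^sub>1 = c\<^sub>0\<close>, \<open>\<sigma>\<^sub>2 = \<dot>c\<^sub>0\<close> and the convolution over \<open>k = 1..m-1\<close> into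
  \<open>c\<^sub>0\<close>, \<open>c\<^sub>1\<close> and the convolution over \<open>s = 0..n-1\<close>. Strong induction on the index then
  identifies the two sequences on an open set, where functions that agree also have the
  same derivatives.\<close>

lemma deriv_eq_if_eq_on_open:
  assumes "open S" "t \<in> S" "\<forall>x\<in>S. f x = g x"
  shows "deriv f t = deriv g t"
proof (rule deriv_cong_ev)
  show "\<forall>\<^sub>F x in nhds t. f x = g x"
    using assms eventually_nhds by blast
qed simp

lemma sum_convolution_shift:
  fixes a :: "nat \<Rightarrow> 'a :: semiring_0"
  shows "(\<Sum>j\<in>{1..Suc k}. a j * a (Suc (Suc k) - j)) = (\<Sum>s\<le>k. a (Suc s) * a (Suc (k - s)))"
proof -
  have "(\<Sum>j\<in>{1..Suc k}. a j * a (Suc (Suc k) - j))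
      = (\<Sum>s\<in>{0..k}. a (Suc s) * a (Suc (Suc k) - Suc s))"
    by (subst sum.shift_bounds_cl_Suc_ivl[symmetric]) simp
  also have "\<dots> = (\<Sum>s\<le>k. a (Suc s) * a (Suc (k - s)))"
    by (intro sum.cong) (auto simp: Suc_diff_le)
  finally show ?thesis .
qed

lemma kdv_sigma_Suc_eq_toda_c:
  assumes "open S" "c0 holomorphic_on S"
  shows "\<forall>t\<in>S. kdv_sigma (\<lambda>t. - c0 t) (Suc m) t = toda_c c0 m t"
proof (induction m rule: less_induct)
  case (less m)
  let ?\<sigma> = "kdv_sigma (\<lambda>t. - c0 t)" and ?c = "toda_c c0"
  consider "m = 0" | "m = 1" | k where "m = Suc (Suc k)"
    by (metis One_nat_def not0_implies_Suc)
  then show ?case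
  proof cases
    case 1
    then show ?thesis by simp
  next
    case 2
    have "deriv (\<lambda>t. - c0 t) t = - deriv c0 t" if "t \<in> S" for t
      using assms that holomorphic_on_imp_differentiable_at by (simp add: deriv_minus)
    with 2 show ?thesis by simp
  next
    case 3
    have IH: "?\<sigma> (Suc j) t = ?c j t" if "j \<le> Suc k" "t \<in> S" for j t
      using less 3 that by auto
    show ?thesis
    proof
      fix t assume t: "t \<in> S"
      have "deriv (?\<sigma> (Suc (Suc k))) t = deriv (?c (Suc k)) t"
        using deriv_eq_if_eq_on_open[OF assms(1) t] IH[of "Suc k"] by blast
      moreover have "(\<Sum>j\<in>{1..Suc k}. ?\<sigma> j t * ?\<sigma> (Suc (Suc k) - j) t)
          = (\<Sum>s\<le>k. ?c s t * ?c (k - s) t)"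
        unfolding sum_convolution_shift[of "\<lambda>j. ?\<sigma> j t"] using IH t by (intro sum.cong) auto
      ultimately show "?\<sigma> (Suc m) t = ?c m t"
        using 3 by simp
    qed
  qed
qed

theorem mainTheorem2:
  fixes c0 :: "complex \<Rightarrow> complex" and S :: "complex set"
  assumes "open S" and "connected S"
    and "c0 holomorphic_on S"
    and "\<exists>t\<in>S. c0 t \<noteq> 0"
  shows "\<forall>m\<ge>1. \<forall>t\<in>S. kdv_sigma (\<lambda>t. - c0 t) m t = toda_c c0 (m - 1) t"
proof (intro allI impI)
  fix m :: nat assume "m \<ge> 1"
  then obtain j where "m = Suc j" by (cases m) auto
  then show "\<forall>t\<in>S. kdv_sigma (\<lambda>t. - c0 t) m t = toda_c c0 (m - 1) t"
    using kdv_sigma_Suc_eq_toda_c[OF assms(1,3), of j] by simp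
qed

end
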